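(* Let $G$ be a 2-step nilpotent (connected, simply connected) Lie group with Lie algebra $\mathfrak{g}=\mathfrak{v}\oplus\mathfrak{z}$, where $\mathfrak{z}$ is the center, and let $\langle\cdot,\cdot\rangle$ be an inner product on $\mathfrak{v}$. Suppose that $J_\eta$ has rank $2$ for all $\eta\in\mathfrak{z}^*\setminus\{0\}$. Then $G$ satisfies Assumption (A) with the sublaplacian $L$ associated with $\langle\cdot,\cdot\rangle$, and also with any other sublaplacian associated with an inner product on any linear complement of $\mathfrak{z}$. Moreover, let $G_\mathbb{C}$ be the complexification of $G$, regarded as a real 2-step group with Lie algebra $\mathfrak{g}_\mathbb{C}=\mathfrak{v}_\mathbb{C}\oplus\mathfrak{z}_\mathbb{C}$, and endow $\mathfrak{v}_\mathbb{C}=\mathfrak{v}\oplus i\mathfrak{v}$ with the real inner product induced by $\langle\cdot,\cdot\rangle$ (i.e. $\langle x_R+ix_I,x'_R+ix'_I\rangle=\langle x_R,x'_R\rangle+\langle x_I,x_I'\rangle$). Then $G_\mathbb{C}$ with the associated sublaplacian satisfies Assumption (A).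
   Context: For a 2-step group with Lie algebra $\mathfrak{g}=\mathfrak{v}\oplus\mathfrak{z}$ ($\mathfrak{z}$ the center, $\mathfrak{v}$ a complement) and an inner product $\langle\cdot,\cdot\rangle$ on $\mathfrak{v}$, the associated sublaplacian is $L=-\sum_jX_j^2$ with $\{X_j\}$ an orthonormal basis of $\mathfrak{v}$, and for $\eta\in\mathfrak{z}^*$, $J_\eta$ is the skew-adjoint endomorphism of $\mathfrak{v}$ with $\eta([x,x'])=\langle J_\eta x,x'\rangle$ for all $x,x'\in\mathfrak{v}$. Assumption (A) for $(G,L)$: there exist integers $r_1,\dots,r_k>0$ and an orthogonal decomposition $\mathfrak{v}=\mathfrak{v}_1\oplus\dots\oplus\mathfrak{v}_k$ with orthogonal projections $P_j$ such that for all $\eta\in\mathfrak{z}^*\setminus\{0\}$ and all $j$, $J_\eta P_j=P_jJ_\eta$ and $J_\eta^2P_j$ has rank $2r_j$ and a unique nonzero eigenvalue. *)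

theory Defs
  imports "HOL-Analysis.Analysis"
begin

text \<open>A finite-dimensional real Lie algebra is modelled as a euclidean_space type 'g
  (only its real vector space structure is used) together with a bracket br.\<close>

definition lie_algebra :: "('g::euclidean_space \<Rightarrow> 'g \<Rightarrow> 'g) \<Rightarrow> bool" where
  "lie_algebra br \<longleftrightarrow> bilinear br \<and> (\<forall>x. br x x = 0) \<and>
     (\<forall>x y w. br x (br y w) + br y (br w x) + br w (br x y) = 0)"

definition two_step :: "('g::euclidean_space \<Rightarrow> 'g \<Rightarrow> 'g) \<Rightarrow> bool" where
  "two_step br \<longleftrightarrow> lie_algebra br \<and> (\<forall>x y w. br (br x y) w = 0) \<and> (\<exists>x y. br x y \<noteq> 0)"

definition center :: "('g::euclidean_space \<Rightarrow> 'g \<Rightarrow> 'g) \<Rightarrow> 'g set" where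
  "center br = {w. \<forall>x. br w x = 0}"

definition complement_of_center :: "('g::euclidean_space \<Rightarrow> 'g \<Rightarrow> 'g) \<Rightarrow> 'g set \<Rightarrow> bool" where
  "complement_of_center br V \<longleftrightarrow> subspace V \<and> V \<inter> center br = {0} \<and>
     (\<forall>g. \<exists>x\<in>V. \<exists>w\<in>center br. g = x + w)"

definition inner_product_on :: "'g::euclidean_space set \<Rightarrow> ('g \<Rightarrow> 'g \<Rightarrow> real) \<Rightarrow> bool" where
  "inner_product_on V ip \<longleftrightarrow>
     (\<forall>x\<in>V. \<forall>y\<in>V. ip x y = ip y x) \<and>
     (\<forall>x\<in>V. \<forall>y\<in>V. \<forall>z\<in>V. \<forall>a b. ip (a *\<^sub>R x + b *\<^sub>R y) z = a * ip x z + b * ip y z) \<and>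
     (\<forall>x\<in>V. x \<noteq> 0 \<longrightarrow> ip x x > 0)"

text \<open>Elements eta of z^* are represented by linear functionals on 'g (only their restriction
  to the centre matters, since [x,x'] lies in the centre).\<close>
definition Jmap :: "('g::euclidean_space \<Rightarrow> 'g \<Rightarrow> 'g) \<Rightarrow> 'g set \<Rightarrow> ('g \<Rightarrow> 'g \<Rightarrow> real)
    \<Rightarrow> ('g \<Rightarrow> real) \<Rightarrow> 'g \<Rightarrow> 'g" where
  "Jmap br V ip \<eta> x = (THE y. y \<in> V \<and> (\<forall>x'\<in>V. ip y x' = \<eta> (br x x')))"

definition oproj :: "('g::euclidean_space \<Rightarrow> 'g \<Rightarrow> real) \<Rightarrow> 'g set \<Rightarrow> 'g \<Rightarrow> 'g" where
  "oproj ip W x = (THE y. y \<in> W \<and> (\<forall>w\<in>W. ip (x - y) w = 0))"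

definition nonzero_dual_center :: "('g::euclidean_space \<Rightarrow> 'g \<Rightarrow> 'g) \<Rightarrow> ('g \<Rightarrow> real) \<Rightarrow> bool" where
  "nonzero_dual_center br \<eta> \<longleftrightarrow> linear \<eta> \<and> (\<exists>w\<in>center br. \<eta> w \<noteq> 0)"

definition assumptionA :: "('g::euclidean_space \<Rightarrow> 'g \<Rightarrow> 'g) \<Rightarrow> 'g set \<Rightarrow> ('g \<Rightarrow> 'g \<Rightarrow> real) \<Rightarrow> bool" where
  "assumptionA br V ip \<longleftrightarrow>
    (\<exists>(k::nat) (Vs :: nat \<Rightarrow> 'g set) (r :: nat \<Rightarrow> nat).
       (\<forall>j<k. r j > 0) \<and>
       (\<forall>j<k. subspace (Vs j) \<and> Vs j \<subseteq> V) \<and>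
       (\<forall>i<k. \<forall>j<k. i \<noteq> j \<longrightarrow> (\<forall>x\<in>Vs i. \<forall>y\<in>Vs j. ip x y = 0)) \<and>
       V = span (\<Union>j<k. Vs j) \<and>
       (\<forall>\<eta>. nonzero_dual_center br \<eta> \<longrightarrow> (\<forall>j<k.
          (\<forall>x\<in>V. Jmap br V ip \<eta> (oproj ip (Vs j) x) = oproj ip (Vs j) (Jmap br V ip \<eta> x)) \<and>
          dim ((\<lambda>x. Jmap br V ip \<eta> (Jmap br V ip \<eta> (oproj ip (Vs j) x))) ` V) = 2 * r j \<and>
          (\<exists>!\<mu>::real. \<mu> \<noteq> 0 \<and> (\<exists>x\<in>V. x \<noteq> 0 \<and>
              Jmap br V ip \<eta> (Jmap br V ip \<eta> (oproj ip (Vs j) x)) = \<mu> *\<^sub>R x)))))"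

text \<open>Complexification g_C = g + i g, realised on pairs (a,b) = a + i b.\<close>
definition complexify_br :: "('g::euclidean_space \<Rightarrow> 'g \<Rightarrow> 'g) \<Rightarrow> ('g \<times> 'g) \<Rightarrow> ('g \<times> 'g) \<Rightarrow> ('g \<times> 'g)" where
  "complexify_br br p q = (br (fst p) (fst q) - br (snd p) (snd q), br (fst p) (snd q) + br (snd p) (fst q))"

definition complexify_ip :: "('g \<Rightarrow> 'g \<Rightarrow> real) \<Rightarrow> ('g \<times> 'g) \<Rightarrow> ('g \<times> 'g) \<Rightarrow> real" where
  "complexify_ip ip p q = ip (fst p) (fst q) + ip (snd p) (snd q)"

end

theory Submission
  imports Defs
begin

text \<open>\<open>J\<^sub>\<eta>\<close> is skew-adjoint; when it has rank 2, \<open>J\<^sub>\<eta>\<^sup>2\<close> acts on its two-dimensional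
  image as a nonzero scalar, so the trivial decomposition of \<open>v\<close> already satisfies (A).
  The rank of \<open>J\<^sub>\<eta>\<close> is the same for every complement of the centre and every inner
  product, because changing them composes \<open>J\<^sub>\<eta>\<close> with an injective linear map.

  On the complexification, with \<open>\<alpha> = \<eta>(\<cdot>, 0)\<close> and \<open>\<beta> = \<eta>(0, \<cdot>)\<close>, one has
  \<open>J\<^sup>C\<^sub>\<eta>(a + ib) = (J\<^sub>\<alpha> a + J\<^sub>\<beta> b) + i(J\<^sub>\<beta> a - J\<^sub>\<alpha> b)\<close>, a skew map anticommuting
  with multiplication by \<open>i\<close>. Rank 2 means that the 2-forms \<open>\<langle>J\<^sub>\<eta> \<cdot>, \<cdot>\<rangle>\<close> satisfy the
  Pluecker relations; polarised in \<open>\<eta>\<close>, they place the image of \<open>J\<^sup>C\<^sub>\<eta>\<close> in the complex span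
  of two vectors, so it has real dimension at most 4. An orthogonal frame
  \<open>u, iu, Ju, iJu\<close> inside the image then shows that the dimension is exactly 4 and
  that \<open>J\<^sup>2\<close> is a scalar on it.\<close>

section \<open>Inner products on a subspace\<close>

lemma inner_sum_orthonormal:
  assumes "finite B" "pairwise orthogonal B" "\<forall>x\<in>B. norm x = 1" "b \<in> B"
  shows "(\<Sum>x\<in>B. c x *\<^sub>R x) \<bullet> b = c b"
proof -
  have "(\<Sum>x\<in>B. c x *\<^sub>R x) \<bullet> b = c b * (b \<bullet> b) + (\<Sum>x\<in>B-{b}. c x * (x \<bullet> b))"
    using assms(1,4) by (simp add: inner_sum_left sum.remove inner_add_left)
  moreover have "(\<Sum>x\<in>B-{b}. c x * (x \<bullet> b)) = 0"
    using assms(2,4) by (intro sum.neutral) (auto simp: pairwise_def orthogonal_def)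
  moreover have "b \<bullet> b = 1" using assms(3,4) by (metis power2_norm_eq_inner power_one)
  ultimately show ?thesis by simp
qed

locale inner_form_on =
  fixes V :: "'a::euclidean_space set" and q :: "'a \<Rightarrow> 'a \<Rightarrow> real"
  assumes subspace_V: "subspace V"
    and bilinear_q: "bilinear q"
    and commute: "q x y = q y x"
    and pos: "x \<in> V \<Longrightarrow> x \<noteq> 0 \<Longrightarrow> 0 < q x x"
begin

lemma form_simps:
  "q (x + y) z = q x z + q y z" "q z (x + y) = q z x + q z y"
  "q (x - y) z = q x z - q y z" "q z (x - y) = q z x - q z y"
  "q (c *\<^sub>R x) z = c * q x z" "q z (c *\<^sub>R x) = c * q z x"
  "q (- x) z = - q x z" "q z (- x) = - q z x"
  "q 0 z = 0" "q z 0 = 0"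
  by (simp_all add: bilinear_ladd bilinear_radd bilinear_lsub bilinear_rsub bilinear_lmul
      bilinear_rmul bilinear_lneg bilinear_rneg bilinear_lzero bilinear_rzero bilinear_q)

lemma linear_left: "linear (\<lambda>x. q x y)"
  using bilinear_q unfolding bilinear_def by blast

lemma linear_right: "linear (q x)"
  using bilinear_q unfolding bilinear_def by blast

lemma sum_left: "q (sum f S) z = (\<Sum>i\<in>S. q (f i) z)"
  using linear_sum[OF linear_left] by simp

lemma nonneg: "x \<in> V \<Longrightarrow> 0 \<le> q x x"
  using pos[of x] by (cases "x = 0") (auto simp: form_simps)

lemma self_eq_0_iff: "x \<in> V \<Longrightarrow> q x x = 0 \<longleftrightarrow> x = 0"
  using pos[of x] by (cases "x = 0") (auto simp: form_simps)

lemma eq_if_same_pairings: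
  assumes "y \<in> V" "y' \<in> V" "\<And>x. x \<in> V \<Longrightarrow> q y x = q y' x"
  shows "y = y'"
proof -
  have d: "y - y' \<in> V" using assms subspace_V subspace_diff by blast
  moreover have "q (y - y') (y - y') = 0" using assms(3)[OF d] by (simp add: form_simps)
  ultimately show ?thesis using self_eq_0_iff by simp
qed

lemma neq_if_orthogonal: "x \<in> V \<Longrightarrow> x \<noteq> 0 \<Longrightarrow> q x y = 0 \<Longrightarrow> x \<noteq> y"
  using pos by fastforce

lemma coefficient_in_orthogonal_family:
  assumes "finite F" "pairwise (\<lambda>a b. q a b = 0) F" "f \<in> F"
  shows "q (\<Sum>v\<in>F. c v *\<^sub>R v) f = c f * q f f"
proof -
  have "q (\<Sum>v\<in>F. c v *\<^sub>R v) f = c f * q f f + (\<Sum>v\<in>F-{f}. c v * q v f)"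
    using assms(1,3) by (simp add: sum_left form_simps sum.remove)
  also have "(\<Sum>v\<in>F-{f}. c v * q v f) = 0"
    using assms(2,3) by (intro sum.neutral) (auto simp: pairwise_def)
  finally show ?thesis by simp
qed

lemma independent_orthogonal:
  assumes "finite F" "F \<subseteq> V" "0 \<notin> F" "pairwise (\<lambda>a b. q a b = 0) F"
  shows "independent F"
  unfolding independent_explicit
proof (intro conjI allI impI ballI)
  fix c v assume "(\<Sum>v\<in>F. c v *\<^sub>R v) = 0" "v \<in> F"
  then have "c v * q v v = 0"
    using coefficient_in_orthogonal_family[OF assms(1,4)] by (metis form_simps(9))
  moreover have "0 < q v v" using pos assms(2,3) \<open>v \<in> F\<close> by blast
  ultimately show "c v = 0" by simp
qed fact

lemma spanned_by_orthogonal_family: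
  assumes "finite F" "F \<subseteq> W" "W \<subseteq> V" "0 \<notin> F" "pairwise (\<lambda>a b. q a b = 0) F"
    and "dim W \<le> card F"
  shows "W \<subseteq> span F" "dim W = card F"
proof -
  have ind: "independent F" using independent_orthogonal assms by blast
  then have "card F \<le> dim W" using independent_card_le_dim assms(2) by blast
  then show "dim W = card F" using assms(6) by simp
  then show "W \<subseteq> span F" using card_eq_dim[OF assms(2)] assms(1) ind by simp
qed

lemma in_span_single_if_orthogonal:
  assumes "finite F" "pairwise (\<lambda>a b. q a b = 0) F" "F \<subseteq> V" "0 \<notin> F" "u \<in> F"
    and "v \<in> span F" "\<And>f. f \<in> F \<Longrightarrow> f \<noteq> u \<Longrightarrow> q v f = 0"
  shows "\<exists>k. v = k *\<^sub>R u"
proof -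
  obtain c where v: "v = (\<Sum>f\<in>F. c f *\<^sub>R f)"
    using assms(1,6) span_finite by auto
  have "c f = 0" if "f \<in> F" "f \<noteq> u" for f
  proof -
    have "c f * q f f = 0"
      using assms(7)[OF that] coefficient_in_orthogonal_family[OF assms(1,2) that(1)] v by simp
    moreover have "0 < q f f" using pos that(1) assms(3,4) by blast
    ultimately show ?thesis by simp
  qed
  then have "v = (\<Sum>f\<in>F. if f = u then c u *\<^sub>R u else 0)"
    unfolding v by (intro sum.cong) auto
  then show ?thesis using assms(1,5) by (auto simp: sum.delta)
qed

lemma represents_ex1:
  assumes "linear \<phi>"
  shows "\<exists>!y. y \<in> V \<and> (\<forall>x\<in>V. q y x = \<phi> x)"
proof -
  obtain B where B: "B \<subseteq> V" "pairwise orthogonal B" "\<forall>x\<in>B. norm x = 1"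
    "independent B" "span B = V"
    using orthonormal_basis_subspace[OF subspace_V] by metis
  have "finite B" using B(4) finiteI_independent by blast
  note inner_B = inner_sum_orthonormal[OF this B(2,3)]
  have eq_on_V: "f x = g x" if "linear f" "linear g" "\<And>b. b \<in> B \<Longrightarrow> f b = g b" "x \<in> V" for f g :: "'a \<Rightarrow> real" and x
    using linear_eq_on_span[OF that(1,2,3)] that(4) B(5) by blast
  text \<open>The Gram map \<open>G\<close> is injective on \<open>V\<close>, hence onto \<open>V\<close>.\<close>
  define G where "G y = (\<Sum>b\<in>B. q y b *\<^sub>R b)" for y
  have linG: "linear G"
    by (rule linearI) (simp_all add: G_def form_simps scaleR_add_left sum.distrib scaleR_sum_right)
  have GV: "G ` V \<subseteq> V"
    using B(1) subspace_V unfolding G_def by (auto intro!: subspace_sum subspace_scale)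
  have "inj_on G V"
  proof (rule inj_onI)
    fix x y assume xy: "x \<in> V" "y \<in> V" "G x = G y"
    have "q x b = q y b" if "b \<in> B" for b
      using inner_B[OF that, of "\<lambda>b. q x b"] inner_B[OF that, of "\<lambda>b. q y b"] xy(3)
      unfolding G_def by simp
    then have "q (x - y) z = 0" if "z \<in> V" for z
      using eq_on_V[OF linear_right linear_zero _ that, of "x - y"] by (simp add: form_simps)
    then show "x = y" using eq_if_same_pairings[of x y] xy by (simp add: form_simps)
  qed
  then have "dim (G ` V) = dim V"
    using dim_image_eq[OF linG] span_eq_iff[THEN iffD2, OF subspace_V] by metis
  then have "G ` V = V"
    using subspace_dim_equal[OF linear_subspace_image[OF linG subspace_V] subspace_V GV] by simp
  moreover have "(\<Sum>b\<in>B. \<phi> b *\<^sub>R b) \<in> V"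
    using B(1) subspace_V by (auto intro!: subspace_sum subspace_scale)
  ultimately obtain y where y: "y \<in> V" "G y = (\<Sum>b\<in>B. \<phi> b *\<^sub>R b)" by force
  then have "q y b = \<phi> b" if "b \<in> B" for b
    using inner_B[OF that, of "q y"] inner_B[OF that, of \<phi>] unfolding G_def by simp
  then have "\<forall>x\<in>V. q y x = \<phi> x"
    using eq_on_V[OF linear_right assms] by blast
  with y(1) show ?thesis by (metis eq_if_same_pairings)
qed

end

definition representer :: "'a set \<Rightarrow> ('a \<Rightarrow> 'a \<Rightarrow> real) \<Rightarrow> ('a \<Rightarrow> real) \<Rightarrow> 'a" where
  "representer V q \<phi> = (THE y. y \<in> V \<and> (\<forall>x\<in>V. q y x = \<phi> x))"

lemma representer_cong:
  "(\<And>x y. x \<in> V \<Longrightarrow> y \<in> V \<Longrightarrow> ip x y = q x y) \<Longrightarrow> representer V ip = representer V q"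
  unfolding representer_def by (intro ext arg_cong[where f = The]) auto

context inner_form_on
begin

lemma representer:
  assumes "linear \<phi>"
  shows "representer V q \<phi> \<in> V" "x \<in> V \<Longrightarrow> q (representer V q \<phi>) x = \<phi> x"
  using theI'[OF represents_ex1[OF assms]] unfolding representer_def by auto

lemma representer_eqI:
  assumes "y \<in> V" "\<And>x. x \<in> V \<Longrightarrow> q y x = \<phi> x"
  shows "representer V q \<phi> = y"
  unfolding representer_def
  by (rule the_equality) (use assms eq_if_same_pairings in auto)

lemma linear_representer:
  assumes "\<And>y. linear (\<phi> y)" and "\<And>x. linear (\<lambda>y. \<phi> y x)"
  shows "linear (\<lambda>y. representer V q (\<phi> y))"
proof (rule linearI)
  note rep = representer[OF assms(1)]
  show "representer V q (\<phi> (y + z)) = representer V q (\<phi> y) + representer V q (\<phi> z)" for y z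
    by (rule representer_eqI)
      (auto simp: rep subspace_V subspace_add form_simps linear_add[OF assms(2)])
  show "representer V q (\<phi> (c *\<^sub>R y)) = c *\<^sub>R representer V q (\<phi> y)" for c y
    by (rule representer_eqI)
      (auto simp: rep subspace_V subspace_scale form_simps linear_scale[OF assms(2)])
qed

end

definition linear_retraction :: "'a::euclidean_space set \<Rightarrow> 'a \<Rightarrow> 'a" where
  "linear_retraction V = (SOME P. linear P \<and> range P \<subseteq> V \<and> (\<forall>v\<in>V. P v = v))"

lemma linear_retraction:
  assumes "subspace V"
  shows "linear (linear_retraction V)" "linear_retraction V x \<in> V"
    "v \<in> V \<Longrightarrow> linear_retraction V v = v"
proof -
  have "\<exists>P. linear P \<and> range P \<subseteq> V \<and> (\<forall>v\<in>V. P v = v)"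
    using linear_exists_left_inverse_on[OF linear_id assms] by auto
  from someI_ex[OF this] show "linear (linear_retraction V)" "linear_retraction V x \<in> V"
    "v \<in> V \<Longrightarrow> linear_retraction V v = v"
    unfolding linear_retraction_def by auto
qed

text \<open>Pulling \<open>ip\<close> back along a linear retraction onto \<open>V\<close> gives a bilinear form on the
  whole space that agrees with \<open>ip\<close> on \<open>V\<close>; only these values enter \<open>Jmap\<close> and \<open>oproj\<close>.\<close>

definition extend_form :: "'a::euclidean_space set \<Rightarrow> ('a \<Rightarrow> 'a \<Rightarrow> real) \<Rightarrow> 'a \<Rightarrow> 'a \<Rightarrow> real" where
  "extend_form V ip x y = ip (linear_retraction V x) (linear_retraction V y)"

lemma extend_form_eq: "subspace V \<Longrightarrow> x \<in> V \<Longrightarrow> y \<in> V \<Longrightarrow> extend_form V ip x y = ip x y"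
  by (simp add: extend_form_def linear_retraction)

lemma inner_product_on_add:
  assumes "inner_product_on V ip" "x \<in> V" "y \<in> V" "z \<in> V"
  shows "ip (x + y) z = ip x z + ip y z"
  using assms unfolding inner_product_on_def by (metis scaleR_one mult_1)

lemma inner_product_on_scale:
  assumes "inner_product_on V ip" "x \<in> V" "z \<in> V"
  shows "ip (c *\<^sub>R x) z = c * ip x z"
proof -
  have "\<forall>x\<in>V. \<forall>y\<in>V. \<forall>z\<in>V. \<forall>a b. ip (a *\<^sub>R x + b *\<^sub>R y) z = a * ip x z + b * ip y z"
    using assms(1) unfolding inner_product_on_def by blast
  from this[rule_format, OF assms(2,2,3), of c 0] show ?thesis by simp
qed

lemma inner_form_on_extend_form:
  assumes V: "subspace V" and ip: "inner_product_on V ip"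
  shows "inner_form_on V (extend_form V ip)"
proof
  note P = linear_retraction[OF V] and lin = linear_retraction(1)[OF V, unfolded linear_iff]
  have sym: "ip x y = ip y x" if "x \<in> V" "y \<in> V" for x y
    using ip that unfolding inner_product_on_def by blast
  have left: "linear (\<lambda>x. extend_form V ip x y)" for y
    by (rule linearI)
      (simp_all add: extend_form_def lin P(2) inner_product_on_add[OF ip] inner_product_on_scale[OF ip])
  moreover have "linear (extend_form V ip x)" for x
  proof -
    have "extend_form V ip x = (\<lambda>y. extend_form V ip y x)"
      by (auto simp: extend_form_def sym P(2))
    then show ?thesis using left by simp
  qed
  ultimately show "bilinear (extend_form V ip)" unfolding bilinear_def by blast
  show "extend_form V ip x y = extend_form V ip y x" for x y
    by (simp add: extend_form_def sym P(2))
  show "0 < extend_form V ip x x" if "x \<in> V" "x \<noteq> 0" for x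
    using ip that unfolding inner_product_on_def by (simp add: extend_form_eq V)
qed (fact V)

lemma Jmap_eq_representer: "Jmap br V q \<eta> x = representer V q (\<lambda>x'. \<eta> (br x x'))"
  unfolding Jmap_def representer_def ..

lemma Jmap_cong:
  assumes "\<And>x y. x \<in> V \<Longrightarrow> y \<in> V \<Longrightarrow> ip x y = q x y"
  shows "Jmap br V ip = Jmap br V q"
  by (intro ext) (simp add: Jmap_eq_representer representer_cong[OF assms])

lemma (in inner_form_on) oproj_self:
  assumes "\<And>x y. x \<in> V \<Longrightarrow> y \<in> V \<Longrightarrow> ip x y = q x y" "x \<in> V"
  shows "oproj ip V x = x"
  unfolding oproj_def
proof (rule the_equality)
  show "x \<in> V \<and> (\<forall>w\<in>V. ip (x - x) w = 0)"
    using assms(1)[of 0] assms(2) subspace_V subspace_0 by (auto simp: form_simps)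
  fix y assume y: "y \<in> V \<and> (\<forall>w\<in>V. ip (x - y) w = 0)"
  then have "x - y \<in> V" using assms(2) subspace_V subspace_diff by blast
  with y have "q (x - y) w = 0" if "w \<in> V" for w using assms(1) that by metis
  then show "y = x" using eq_if_same_pairings[of y x] y assms(2) by (simp add: form_simps)
qed

section \<open>The maps \<open>J\<^sub>\<eta>\<close>\<close>

lemma two_step_bilinear: "two_step br \<Longrightarrow> bilinear br"
  unfolding two_step_def lie_algebra_def by blast

lemma two_step_antisym:
  assumes "two_step br" shows "br x y = - br y x"
proof -
  note b = two_step_bilinear[OF assms]
  have alt: "br z z = 0" for z using assms unfolding two_step_def lie_algebra_def by blast
  have "0 = br (x + y) (x + y)" using alt by simp
  also have "\<dots> = br x y + br y x"
    by (simp add: bilinear_ladd[OF b] bilinear_radd[OF b] alt[of x] alt[of y])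
  finally show ?thesis by (metis eq_neg_iff_add_eq_0)
qed

lemma two_step_bracket_in_center: "two_step br \<Longrightarrow> br x y \<in> center br"
  unfolding two_step_def center_def by blast

lemma bracket_center_right: "two_step br \<Longrightarrow> z \<in> center br \<Longrightarrow> br x z = 0"
  using two_step_antisym[of br x z] unfolding center_def by auto

lemma subspace_center:
  assumes "two_step br" shows "subspace (center br)"
  using two_step_bilinear[OF assms]
  unfolding subspace_def center_def by (auto simp: bilinear_ladd bilinear_lmul bilinear_lzero)

context inner_form_on
begin

lemma linear_bracket_pairing: "bilinear br \<Longrightarrow> linear \<eta> \<Longrightarrow> linear (\<lambda>x'. \<eta> (br x x'))"
  using linear_compose[of "br x" \<eta>] unfolding bilinear_def o_def by auto

lemma Jmap:
  assumes "bilinear br" "linear \<eta>"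
  shows "Jmap br V q \<eta> x \<in> V" "x' \<in> V \<Longrightarrow> q (Jmap br V q \<eta> x) x' = \<eta> (br x x')"
  unfolding Jmap_eq_representer using representer[OF linear_bracket_pairing[OF assms]] by auto

lemma Jmap_eqI:
  "y \<in> V \<Longrightarrow> (\<And>x'. x' \<in> V \<Longrightarrow> q y x' = \<eta> (br x x')) \<Longrightarrow> Jmap br V q \<eta> x = y"
  unfolding Jmap_eq_representer by (rule representer_eqI)

lemma linear_Jmap:
  assumes b: "bilinear br" and l: "linear \<eta>"
  shows "linear (Jmap br V q \<eta>)"
proof -
  have "linear (\<lambda>x. \<eta> (br x x'))" for x'
    using linear_compose[of "\<lambda>x. br x x'" \<eta>] b l unfolding bilinear_def o_def by auto
  then show ?thesis
    unfolding Jmap_eq_representer[abs_def]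
    by (intro linear_representer linear_bracket_pairing[OF b l])
qed

lemma Jmap_skew:
  assumes t: "two_step br" and l: "linear \<eta>" and "x \<in> V" "y \<in> V"
  shows "q (Jmap br V q \<eta> x) y = - q x (Jmap br V q \<eta> y)"
proof -
  note J = Jmap[OF two_step_bilinear[OF t] l]
  have "q (Jmap br V q \<eta> x) y = - \<eta> (br y x)"
    using J(2)[OF assms(4)] two_step_antisym[OF t, of x y] linear_neg[OF l] by simp
  also have "\<eta> (br y x) = q x (Jmap br V q \<eta> y)"
    using J(2)[OF assms(3)] commute by simp
  finally show ?thesis .
qed

lemma Jmap_eq_0:
  assumes "two_step br" "\<forall>w\<in>center br. \<eta> w = 0"
  shows "Jmap br V q \<eta> x = 0"
  using assms two_step_bracket_in_center subspace_V subspace_0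
  by (intro Jmap_eqI) (auto simp: form_simps)

lemma Jmap_add:
  assumes "bilinear br" "linear \<eta>1" "linear \<eta>2"
  shows "Jmap br V q (\<lambda>w. \<eta>1 w + \<eta>2 w) x = Jmap br V q \<eta>1 x + Jmap br V q \<eta>2 x"
  using Jmap[OF assms(1,2)] Jmap[OF assms(1,3)] subspace_V
  by (intro Jmap_eqI) (auto simp: subspace_add form_simps)

end

section \<open>Independence of the complement\<close>

definition center_proj :: "('g::euclidean_space \<Rightarrow> 'g \<Rightarrow> 'g) \<Rightarrow> 'g set \<Rightarrow> 'g \<Rightarrow> 'g" where
  "center_proj br V x = (THE p. p \<in> V \<and> x - p \<in> center br)"

context
  fixes br :: "'g::euclidean_space \<Rightarrow> 'g \<Rightarrow> 'g" and V :: "'g set"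
  assumes two_step: "two_step br" and complement: "complement_of_center br V"
begin

lemma center_proj_eqI:
  assumes "p \<in> V" "x - p \<in> center br"
  shows "center_proj br V x = p"
  unfolding center_proj_def
proof (rule the_equality)
  fix p' assume p': "p' \<in> V \<and> x - p' \<in> center br"
  have "p' - p \<in> V"
    using p' assms complement subspace_diff unfolding complement_of_center_def by blast
  moreover have "p' - p \<in> center br"
    using subspace_diff[OF subspace_center[OF two_step] assms(2), of "x - p'"] p' by simp
  ultimately have "p' - p \<in> V \<inter> center br" by blast
  then show "p' = p" using complement unfolding complement_of_center_def by auto
qed (use assms in blast)

lemma center_proj: "center_proj br V x \<in> V" "x - center_proj br V x \<in> center br"
proof -
  obtain v w where "v \<in> V" "w \<in> center br" "x = v + w"
    using complement unfolding complement_of_center_def by blast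
  then show "center_proj br V x \<in> V" "x - center_proj br V x \<in> center br"
    using center_proj_eqI[of v x] by auto
qed

lemma linear_center_proj: "linear (center_proj br V)"
proof (rule linearI)
  have V: "subspace V" using complement unfolding complement_of_center_def by blast
  note C = subspace_center[OF two_step] and P = center_proj
  show "center_proj br V (x + y) = center_proj br V x + center_proj br V y" for x y
    using subspace_add[OF C P(2)[of x] P(2)[of y]] subspace_add[OF V P(1)[of x] P(1)[of y]]
    by (intro center_proj_eqI) (simp_all add: algebra_simps)
  show "center_proj br V (c *\<^sub>R x) = c *\<^sub>R center_proj br V x" for c x
    using subspace_scale[OF C P(2)[of x], of c] subspace_scale[OF V P(1)[of x], of c]
    by (intro center_proj_eqI) (simp_all add: algebra_simps)
qed

lemma bracket_center_proj:
  "br x (center_proj br V y) = br x y" "br (center_proj br V x) y = br x y"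
proof -
  note b = two_step_bilinear[OF two_step]
  have "br x y = br x (center_proj br V y) + br x (y - center_proj br V y)"
    by (simp add: bilinear_rsub[OF b])
  then show "br x (center_proj br V y) = br x y"
    using bracket_center_right[OF two_step center_proj(2)] by simp
  have "br x y = br (center_proj br V x) y + br (x - center_proj br V x) y"
    by (simp add: bilinear_lsub[OF b])
  then show "br (center_proj br V x) y = br x y"
    using center_proj(2)[of x] unfolding center_def by simp
qed

lemma Jmap_center_proj: "Jmap br W q \<eta> (center_proj br V x) = Jmap br W q \<eta> x"
  by (simp add: Jmap_def bracket_center_proj)

end

lemma center_proj_center_proj:
  assumes "two_step br" "complement_of_center br V0" "complement_of_center br V" "p \<in> V0"
  shows "center_proj br V0 (center_proj br V p) = p"
proof (rule center_proj_eqI[OF assms(1,2,4)])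
  have "center_proj br V p - p = - (p - center_proj br V p)" by simp
  also have "\<dots> \<in> center br"
    using center_proj(2)[OF assms(1,3)] subspace_center[OF assms(1)] subspace_neg by blast
  finally show "center_proj br V p - p \<in> center br" .
qed

lemma Jmap_image_complement_subset:
  assumes "two_step br" "complement_of_center br V" "complement_of_center br W"
  shows "Jmap br V0 q \<eta> ` V \<subseteq> Jmap br V0 q \<eta> ` W"
  using Jmap_center_proj[OF assms(1,3)] center_proj(1)[OF assms(1,3)] by (metis image_eqI image_subsetI)

lemma Jmap_factorization:
  assumes t: "two_step br" and c0: "complement_of_center br V0" and c: "complement_of_center br V"
    and q0: "inner_form_on V0 q0" and q: "inner_form_on V q"
  obtains T where "linear T" "inj_on T V0" "\<And>\<eta> x. linear \<eta> \<Longrightarrow> Jmap br V q \<eta> x = T (Jmap br V0 q0 \<eta> x)"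
proof
  interpret q0: inner_form_on V0 q0 by fact
  interpret q: inner_form_on V q by fact
  define \<pi> where "\<pi> = center_proj br V0"
  have "linear \<pi>" unfolding \<pi>_def by (rule linear_center_proj[OF t c0])
  define T where "T y = representer V q (\<lambda>x'. q0 y (\<pi> x'))" for y
  have pairing: "linear (\<lambda>x'. q0 y (\<pi> x'))" for y
    using linear_compose[OF \<open>linear \<pi>\<close> q0.linear_right] by (simp add: o_def)
  note T = q.representer[OF pairing, folded T_def]
  show "linear T"
    unfolding T_def using q0.linear_left linear_compose[OF \<open>linear \<pi>\<close>]
    by (intro q.linear_representer pairing) (simp add: q0.form_simps linearI)
  show "inj_on T V0"
  proof (rule linear_inj_on_iff_eq_0[OF \<open>linear T\<close> q0.subspace_V, THEN iffD2], intro ballI impI)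
    fix y assume y: "y \<in> V0" "T y = 0"
    have "center_proj br V y \<in> V" using center_proj(1)[OF t c] .
    then have "q0 y (\<pi> (center_proj br V y)) = 0" using T(2) y(2) q.form_simps(9) by metis
    then have "q0 y y = 0" using center_proj_center_proj[OF t c0 c y(1)] unfolding \<pi>_def by simp
    then show "y = 0" using q0.self_eq_0_iff y(1) by blast
  qed
  show "Jmap br V q \<eta> x = T (Jmap br V0 q0 \<eta> x)" if l: "linear \<eta>" for \<eta> x
  proof (rule q.Jmap_eqI[OF T(1)])
    fix x' assume "x' \<in> V"
    then have "q (T (Jmap br V0 q0 \<eta> x)) x' = \<eta> (br x (\<pi> x'))"
      using T(2) q0.Jmap(2)[OF two_step_bilinear[OF t] l] center_proj(1)[OF t c0] unfolding \<pi>_def by simp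
    then show "q (T (Jmap br V0 q0 \<eta> x)) x' = \<eta> (br x x')"
      unfolding \<pi>_def bracket_center_proj[OF t c0] .
  qed
qed

lemma dim_Jmap_image_complement_invariant:
  assumes t: "two_step br" and c0: "complement_of_center br V0" and c: "complement_of_center br V"
    and q0: "inner_form_on V0 q0" and q: "inner_form_on V q" and l: "linear \<eta>"
  shows "dim (Jmap br V q \<eta> ` V) = dim (Jmap br V0 q0 \<eta> ` V0)"
proof -
  obtain T where T: "linear T" "inj_on T V0" "\<And>x. Jmap br V q \<eta> x = T (Jmap br V0 q0 \<eta> x)"
    using Jmap_factorization[OF assms(1-5)] l by metis
  let ?J0 = "Jmap br V0 q0 \<eta>"
  have "Jmap br V q \<eta> ` V = T ` (?J0 ` V)" by (simp add: T(3) image_image)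
  also have "?J0 ` V = ?J0 ` V0"
    using Jmap_image_complement_subset[OF t c c0] Jmap_image_complement_subset[OF t c0 c] by blast
  finally have "Jmap br V q \<eta> ` V = T ` (?J0 ` V0)" .
  moreover have "span (?J0 ` V0) \<subseteq> V0"
    using inner_form_on.Jmap(1)[OF q0 two_step_bilinear[OF t] l] inner_form_on.subspace_V[OF q0]
    by (metis image_subsetI span_minimal)
  ultimately show ?thesis
    using dim_image_eq[OF T(1) inj_on_subset[OF T(2)]] by simp
qed

section \<open>Skew maps of rank two\<close>

locale skew_on = inner_form_on +
  fixes J :: "'a::euclidean_space \<Rightarrow> 'a"
  assumes linear_J: "linear J"
    and J_in: "J x \<in> V"
    and skew: "x \<in> V \<Longrightarrow> y \<in> V \<Longrightarrow> q (J x) y = - q x (J y)"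
begin

lemma orthogonal_self: "x \<in> V \<Longrightarrow> q (J x) x = 0"
  using skew[of x x] commute[of x "J x"] by simp

lemma J_J_neq_0:
  assumes "x \<in> V" "J x \<noteq> 0"
  shows "J (J x) \<noteq> 0"
proof
  assume "J (J x) = 0"
  then have "q (J x) (J x) = 0" using skew[OF assms(1) J_in] by (simp add: form_simps)
  then show False using self_eq_0_iff J_in assms(2) by blast
qed

lemma exists_J_neq_0:
  assumes "0 < dim (J ` V)"
  shows "\<exists>x\<in>V. J x \<noteq> 0"
proof (rule ccontr)
  assume "\<not> ?thesis"
  then have "J ` V \<subseteq> {0}" by auto
  then have "dim (J ` V) = 0" using dim_eq_0 by blast
  with assms show False by simp
qed

lemma J_image_subset: "J ` V \<subseteq> V"
  using J_in by blast

lemma square_scalar_on_image: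
  assumes "J ` V \<subseteq> span F" "\<And>f. f \<in> F \<Longrightarrow> J (J f) = a *\<^sub>R f" "w \<in> J ` V"
  shows "J (J w) = a *\<^sub>R w"
proof -
  have "linear (\<lambda>w. J (J w) - a *\<^sub>R w)"
    using linear_compose[OF linear_J linear_J] by (intro linear_compose_sub) (auto simp: o_def)
  then have "J (J w) - a *\<^sub>R w = 0"
    using linear_eq_0_on_span[of "\<lambda>w. J (J w) - a *\<^sub>R w" F w] assms by auto
  then show ?thesis by simp
qed

lemma rank2_frame:
  assumes "dim (J ` V) = 2"
  obtains u a where "u \<in> V" "u \<noteq> 0" "a \<noteq> 0" "q u (J u) = 0" "J (J u) = a *\<^sub>R u"
    "J ` V \<subseteq> span {u, J u}"
proof -
  obtain x where x: "x \<in> V" "J x \<noteq> 0" using exists_J_neq_0 assms by auto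
  define u where "u = J x"
  have u: "u \<in> V" "u \<noteq> 0" "J u \<noteq> 0" "J (J u) \<noteq> 0"
    using x J_in J_J_neq_0 J_J_neq_0[OF J_in] unfolding u_def by auto
  have orth: "q u (J u) = 0" "q (J u) u = 0" using orthogonal_self[OF u(1)] commute by auto
  let ?F = "{u, J u}"
  have F: "finite ?F" "?F \<subseteq> J ` V" "0 \<notin> ?F" "pairwise (\<lambda>a b. q a b = 0) ?F"
    using x(1) u J_in unfolding u_def by (auto simp: pairwise_insert orth[unfolded u_def])
  have "u \<noteq> J u" using neq_if_orthogonal u(1,2) orth(1) by blast
  then have span: "J ` V \<subseteq> span ?F"
    using spanned_by_orthogonal_family[OF F(1,2) J_image_subset F(3,4)] assms by simp
  have "\<exists>a. J (J u) = a *\<^sub>R u"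
  proof (rule in_span_single_if_orthogonal[OF F(1,4) _ F(3)])
    show "?F \<subseteq> V" using u(1) J_in by auto
    show "J (J u) \<in> span ?F" using span J_in by blast
    show "q (J (J u)) f = 0" if "f \<in> ?F" "f \<noteq> u" for f
      using that orthogonal_self[OF J_in] by auto
  qed simp
  then obtain a where "J (J u) = a *\<^sub>R u" by blast
  moreover have "a \<noteq> 0" using calculation u(4) by auto
  ultimately show thesis using that u(1,2) orth(1) span by blast
qed

lemma rank2_square_scalar:
  assumes "dim (J ` V) = 2"
  shows "\<exists>a. a \<noteq> 0 \<and> (\<forall>w\<in>J ` V. J (J w) = a *\<^sub>R w)"
proof -
  obtain u a where u: "a \<noteq> 0" "J (J u) = a *\<^sub>R u" "J ` V \<subseteq> span {u, J u}"
    using rank2_frame[OF assms] by metis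
  have "J (J f) = a *\<^sub>R f" if "f \<in> {u, J u}" for f
    using that u(2) linear_scale[OF linear_J] by auto
  then show ?thesis using square_scalar_on_image[OF u(3)] u(1) by blast
qed

lemma square_image_eq:
  assumes "\<forall>w\<in>J ` V. J (J w) = a *\<^sub>R w" "a \<noteq> 0"
  shows "(\<lambda>x. J (J x)) ` V = J ` V"
proof
  show "(\<lambda>x. J (J x)) ` V \<subseteq> J ` V" using J_in by auto
  show "J ` V \<subseteq> (\<lambda>x. J (J x)) ` V"
  proof
    fix w assume w: "w \<in> J ` V"
    then have "J (J w) = a *\<^sub>R w" using assms(1) by blast
    then have "w = J (J ((1 / a) *\<^sub>R w))" using assms(2) by (simp add: linear_scale[OF linear_J])
    moreover have "(1 / a) *\<^sub>R w \<in> V" using w J_in subspace_V subspace_scale by blast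
    ultimately show "w \<in> (\<lambda>x. J (J x)) ` V" by (rule image_eqI)
  qed
qed

lemma unique_nonzero_eigenvalue_of_square:
  assumes "\<forall>w\<in>J ` V. J (J w) = a *\<^sub>R w" "a \<noteq> 0" "\<exists>x\<in>V. J x \<noteq> 0"
  shows "\<exists>!\<mu>. \<mu> \<noteq> 0 \<and> (\<exists>x\<in>V. x \<noteq> 0 \<and> J (J x) = \<mu> *\<^sub>R x)"
proof (rule ex1I[of _ a])
  obtain x where "x \<in> V" "J x \<noteq> 0" using assms(3) by blast
  then show "a \<noteq> 0 \<and> (\<exists>x\<in>V. x \<noteq> 0 \<and> J (J x) = a *\<^sub>R x)"
    using assms(1,2) J_in by blast
  fix \<mu> assume "\<mu> \<noteq> 0 \<and> (\<exists>x\<in>V. x \<noteq> 0 \<and> J (J x) = \<mu> *\<^sub>R x)"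
  then obtain y where y: "\<mu> \<noteq> 0" "y \<noteq> 0" "J (J y) = \<mu> *\<^sub>R y" by blast
  then have "y = J ((1 / \<mu>) *\<^sub>R J y)" by (simp add: linear_scale[OF linear_J])
  then have "y \<in> J ` V" using J_in subspace_V subspace_scale by (intro image_eqI) auto
  then have "J (J y) = a *\<^sub>R y" using assms(1) by blast
  then show "\<mu> = a" using y by simp
qed

end

lemma (in inner_form_on) skew_on_Jmap:
  assumes "two_step br" "linear \<eta>"
  shows "skew_on V q (Jmap br V q \<eta>)"
  using Jmap(1)[OF two_step_bilinear] linear_Jmap[OF two_step_bilinear] Jmap_skew assms
  by (intro skew_on.intro skew_on_axioms.intro inner_form_on_axioms) auto

lemma assumptionA_single_block:
  assumes q: "inner_form_on V q" and ip: "\<And>x y. x \<in> V \<Longrightarrow> y \<in> V \<Longrightarrow> ip x y = q x y"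
    and r: "0 < r"
    and H: "\<And>\<eta>. nonzero_dual_center br \<eta> \<Longrightarrow> skew_on V q (Jmap br V q \<eta>) \<and>
        dim (Jmap br V q \<eta> ` V) = 2 * r \<and>
        (\<exists>a. a \<noteq> 0 \<and> (\<forall>w\<in>Jmap br V q \<eta> ` V. Jmap br V q \<eta> (Jmap br V q \<eta> w) = a *\<^sub>R w))"
  shows "assumptionA br V ip"
  unfolding assumptionA_def
proof (intro exI[of _ "1::nat"] exI[of _ "\<lambda>_. V"] exI[of _ "\<lambda>_. r"] conjI allI impI)
  have V: "subspace V" using q inner_form_on.subspace_V by blast
  moreover have U: "(\<Union>j<1::nat. V) = V" by auto
  ultimately show "V = span (\<Union>j<1::nat. V)" unfolding U by (metis span_eq_iff)
  have Jip: "Jmap br V ip = Jmap br V q" by (rule Jmap_cong[OF ip])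
  have proj: "oproj ip V x = x" if "x \<in> V" for x by (rule inner_form_on.oproj_self[OF q ip that])
  fix \<eta> j assume "nonzero_dual_center br \<eta>"
  then obtain a where J: "skew_on V q (Jmap br V q \<eta>)" and d: "dim (Jmap br V q \<eta> ` V) = 2 * r"
    and a: "a \<noteq> 0" "\<forall>w\<in>Jmap br V q \<eta> ` V. Jmap br V q \<eta> (Jmap br V q \<eta> w) = a *\<^sub>R w"
    using H by blast
  interpret skew_on V q "Jmap br V q \<eta>" by fact
  have sq: "(\<lambda>x. Jmap br V ip \<eta> (Jmap br V ip \<eta> (oproj ip V x))) ` V
      = (\<lambda>x. Jmap br V q \<eta> (Jmap br V q \<eta> x)) ` V"
    by (rule image_cong) (simp_all add: Jip proj)
  show "\<forall>x\<in>V. Jmap br V ip \<eta> (oproj ip V x) = oproj ip V (Jmap br V ip \<eta> x)"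
    by (simp add: Jip proj J_in)
  show "dim ((\<lambda>x. Jmap br V ip \<eta> (Jmap br V ip \<eta> (oproj ip V x))) ` V) = 2 * r"
    unfolding sq square_image_eq[OF a(2,1)] by (fact d)
  have "\<exists>x\<in>V. Jmap br V q \<eta> x \<noteq> 0" using exists_J_neq_0 d r by simp
  then show "\<exists>!\<mu>. \<mu> \<noteq> 0 \<and> (\<exists>x\<in>V. x \<noteq> 0 \<and> Jmap br V ip \<eta> (Jmap br V ip \<eta> (oproj ip V x)) = \<mu> *\<^sub>R x)"
    using unique_nonzero_eigenvalue_of_square[OF a(2,1)] by (simp add: Jip proj cong: rev_conj_cong bex_cong)
qed (use r inner_form_on.subspace_V[OF q] in auto)

lemma assumptionA_rank2:
  assumes t: "two_step br" and c0: "complement_of_center br V0" and ip0: "inner_product_on V0 ip0"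
    and rank2: "\<forall>\<eta>. nonzero_dual_center br \<eta> \<longrightarrow> dim (Jmap br V0 ip0 \<eta> ` V0) = 2"
    and c: "complement_of_center br V" and ip: "inner_product_on V ip"
  shows "assumptionA br V ip"
proof -
  have V0: "subspace V0" and V: "subspace V"
    using c0 c unfolding complement_of_center_def by blast+
  note q0 = inner_form_on_extend_form[OF V0 ip0] and q = inner_form_on_extend_form[OF V ip]
  show ?thesis
  proof (rule assumptionA_single_block[OF q extend_form_eq[OF V, symmetric], where r = 1])
    fix \<eta> assume \<eta>: "nonzero_dual_center br \<eta>"
    then have l: "linear \<eta>" unfolding nonzero_dual_center_def by blast
    let ?J = "Jmap br V (extend_form V ip) \<eta>"
    interpret skew_on V "extend_form V ip" ?J
      by (rule inner_form_on.skew_on_Jmap[OF q t l])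
    have "dim (?J ` V) = dim (Jmap br V0 (extend_form V0 ip0) \<eta> ` V0)"
      by (rule dim_Jmap_image_complement_invariant[OF t c0 c q0 q l])
    also have "Jmap br V0 (extend_form V0 ip0) = Jmap br V0 ip0"
      by (rule Jmap_cong) (simp add: extend_form_eq[OF V0])
    finally have "dim (?J ` V) = 2" using rank2 \<eta> by simp
    then show "skew_on V (extend_form V ip) ?J \<and> dim (?J ` V) = 2 * 1 \<and>
        (\<exists>a. a \<noteq> 0 \<and> (\<forall>w\<in>?J ` V. ?J (?J w) = a *\<^sub>R w))"
      using rank2_square_scalar skew_on_axioms by simp
  qed (simp_all add: zero_less_one)
qed

section \<open>Complexification\<close>

definition pluecker ::
    "('a \<Rightarrow> 'a \<Rightarrow> real) \<Rightarrow> ('a \<Rightarrow> 'a) \<Rightarrow> ('a \<Rightarrow> 'a) \<Rightarrow> 'a \<Rightarrow> 'a \<Rightarrow> 'a \<Rightarrow> 'a::real_vector"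
  where
  "pluecker q J K x1 x2 x3 = q (J x1) x2 *\<^sub>R K x3 - q (J x1) x3 *\<^sub>R K x2 + q (J x2) x3 *\<^sub>R K x1"

text \<open>\<open>pluecker q J J = 0\<close> are the Pluecker relations: they say that the 2-form
  \<open>q (J \<cdot>) \<cdot>\<close> is decomposable.\<close>

lemma span_pair_coordinates: "x \<in> span {a, b} \<Longrightarrow> \<exists>k l. x = k *\<^sub>R a + l *\<^sub>R b"
  by (auto simp: span_breakdown_eq span_singleton) (metis add.commute diff_add_cancel)

lemma (in skew_on) rank2_form_eq_det:
  assumes u: "u \<in> V" "a \<noteq> 0" "q u (J u) = 0" "J (J u) = a *\<^sub>R u"
    and y: "y \<in> V" and coords: "J x = l *\<^sub>R u + m *\<^sub>R J u" "J y = l' *\<^sub>R u + m' *\<^sub>R J u"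
  shows "q (J x) y = q u u * (l * m' - m * l')"
proof -
  have Ju_y: "q (J u) y = - l' * q u u"
    using skew[OF u(1) y] coords(2) u(3) by (simp add: form_simps)
  have "a * q u y = - q (J u) (J y)" using skew[OF J_in[of u] y] u(4) by (simp add: form_simps)
  also have "\<dots> = - q (J u) (J u) * m'"
    using coords(2) u(3) commute[of u "J u"] by (simp add: form_simps)
  also have "q (J u) (J u) = - a * q u u"
    using skew[OF u(1) J_in] u(4) by (simp add: form_simps)
  finally have "q u y = m' * q u u" using u(2) by simp
  with Ju_y show ?thesis using coords(1) by (simp add: form_simps algebra_simps)
qed

lemma (in skew_on) pluecker_rank2:
  assumes "dim (J ` V) = 2" "x1 \<in> V" "x2 \<in> V" "x3 \<in> V"
  shows "pluecker q J J x1 x2 x3 = 0"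
proof -
  obtain u a where u: "u \<in> V" "a \<noteq> 0" "q u (J u) = 0" "J (J u) = a *\<^sub>R u"
    "J ` V \<subseteq> span {u, J u}"
    using rank2_frame[OF assms(1)] by metis
  define c where "c = q u u"
  note det = rank2_form_eq_det[OF u(1-4), folded c_def]
  have "\<exists>l m. J x = l *\<^sub>R u + m *\<^sub>R J u" if "x \<in> V" for x
    using u(5) that span_pair_coordinates by blast
  then obtain l1 m1 l2 m2 l3 m3 where
    J1: "J x1 = l1 *\<^sub>R u + m1 *\<^sub>R J u" and J2: "J x2 = l2 *\<^sub>R u + m2 *\<^sub>R J u"
    and J3: "J x3 = l3 *\<^sub>R u + m3 *\<^sub>R J u"
    using assms(2-4) by meson
  have "pluecker q J J x1 x2 x3 = (c * (l1 * m2 - m1 * l2)) *\<^sub>R (l3 *\<^sub>R u + m3 *\<^sub>R J u)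
      - (c * (l1 * m3 - m1 * l3)) *\<^sub>R (l2 *\<^sub>R u + m2 *\<^sub>R J u)
      + (c * (l2 * m3 - m2 * l3)) *\<^sub>R (l1 *\<^sub>R u + m1 *\<^sub>R J u)"
    unfolding pluecker_def det[OF assms(3) J1 J2] det[OF assms(4) J1 J3] det[OF assms(4) J2 J3]
    unfolding J1 J2 J3 ..
  also have "\<dots> = (c * (l1 * m2 - m1 * l2) * l3 - c * (l1 * m3 - m1 * l3) * l2
        + c * (l2 * m3 - m2 * l3) * l1) *\<^sub>R u
      + (c * (l1 * m2 - m1 * l2) * m3 - c * (l1 * m3 - m1 * l3) * m2
        + c * (l2 * m3 - m2 * l3) * m1) *\<^sub>R J u"
    by (simp add: scaleR_add_right scaleR_diff_left scaleR_add_left)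
  also have "\<dots> = 0" by (simp add: algebra_simps)
  finally show ?thesis .
qed

text \<open>A pair \<open>(a, b)\<close> stands for \<open>a + ib\<close>, as in \<open>complexify_br\<close>.\<close>

definition i_mult :: "'a::real_vector \<times> 'a \<Rightarrow> 'a \<times> 'a" where
  "i_mult p = (- snd p, fst p)"

definition cmul :: "complex \<Rightarrow> 'a::real_vector \<times> 'a \<Rightarrow> 'a \<times> 'a" where
  "cmul z v = Re z *\<^sub>R v + Im z *\<^sub>R i_mult v"

lemma linear_i_mult: "linear i_mult"
  by (rule linearI) (auto simp: i_mult_def)

lemma i_mult_i_mult [simp]: "i_mult (i_mult v) = - v"
  by (simp add: i_mult_def prod_eq_iff)

lemma cmul_cmul: "cmul z (cmul w v) = cmul (z * w) v"
  by (simp add: cmul_def linear_add[OF linear_i_mult] linear_scale[OF linear_i_mult] algebra_simps)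

lemma cmul_1: "cmul 1 v = v"
  by (simp add: cmul_def)

lemma cmul_in_span:
  assumes "v \<in> span (B \<union> i_mult ` B)"
  shows "cmul z v \<in> span (B \<union> i_mult ` B)"
proof -
  let ?S = "span (B \<union> i_mult ` B)"
  have "i_mult b \<in> ?S" if hb: "b \<in> B \<union> i_mult ` B" for b
  proof (cases "b \<in> B")
    case True
    then show ?thesis by (intro span_base) blast
  next
    case False
    then obtain c where "c \<in> B" "b = i_mult c" using hb by blast
    then show ?thesis using span_neg[OF span_base[of c "B \<union> i_mult ` B"]] by simp
  qed
  then have "i_mult ` (B \<union> i_mult ` B) \<subseteq> ?S" by blast
  then have "i_mult ` ?S \<subseteq> ?S"
    using span_linear_image[OF linear_i_mult] span_minimal[OF _ subspace_span] by metis
  then show ?thesis using assms unfolding cmul_def by (auto intro: span_add span_scale)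
qed

lemma in_span_if_cmul_in_span:
  assumes "cmul z v \<in> span (B \<union> i_mult ` B)" "z \<noteq> 0"
  shows "v \<in> span (B \<union> i_mult ` B)"
proof -
  have "v = cmul (inverse z) (cmul z v)" using assms(2) by (simp add: cmul_cmul cmul_1)
  then show ?thesis using cmul_in_span[OF assms(1)] by metis
qed
locale skew_on_anticommuting = skew_on +
  fixes I :: "'a::euclidean_space \<Rightarrow> 'a"
  assumes linear_I: "linear I"
    and I_in: "x \<in> V \<Longrightarrow> I x \<in> V"
    and I_I: "I (I x) = - x"
    and I_skew: "x \<in> V \<Longrightarrow> y \<in> V \<Longrightarrow> q (I x) y = - q x (I y)"
    and J_I: "J (I x) = - I (J x)"
begin

lemma I_orthogonal_self: "x \<in> V \<Longrightarrow> q (I x) x = 0"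
  using I_skew[of x x] commute[of x "I x"] by simp

lemma J_I_orthogonal:
  assumes "x \<in> V" shows "q (J x) (I x) = 0"
proof -
  have "q (J x) (I x) = q x (I (J x))"
    using skew[OF assms I_in[OF assms]] J_I by (simp add: form_simps)
  also have "\<dots> = - q (J x) (I x)"
    using I_skew[OF assms J_in] commute[of "I x"] by simp
  finally show ?thesis by simp
qed

lemma I_isometry: "x \<in> V \<Longrightarrow> y \<in> V \<Longrightarrow> q (I x) (I y) = q x y"
  using I_skew[of x "I y"] I_in I_I by (simp add: form_simps)

lemma I_eq_0_iff: "I x = 0 \<longleftrightarrow> x = 0"
  using I_I[of x] linear_0[OF linear_I] by force

lemma I_in_J_image:
  assumes "w \<in> J ` V" shows "I w \<in> J ` V"
proof -
  obtain y where y: "y \<in> V" "w = J y" using assms by blast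
  then have "I w = J (- I y)" using J_I[of y] linear_neg[OF linear_J] by simp
  moreover have "- I y \<in> V" using I_in[OF y(1)] subspace_V subspace_neg by blast
  ultimately show ?thesis by blast
qed

lemma orthogonal_frame:
  assumes "u \<in> J ` V" "u \<noteq> 0"
  defines "F \<equiv> {u, I u, J u, I (J u)}"
  shows "F \<subseteq> J ` V" "0 \<notin> F" "pairwise (\<lambda>a b. q a b = 0) F" "card F = 4"
proof -
  have uV: "u \<in> V" "J u \<in> V" "I u \<in> V" "I (J u) \<in> V" using assms(1) J_in I_in by auto
  have "J u \<noteq> 0" using assms J_J_neq_0 by blast
  then show nz: "0 \<notin> F" using assms(2) I_eq_0_iff unfolding F_def by auto
  show "F \<subseteq> J ` V" using assms(1) I_in_J_image J_in unfolding F_def by auto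
  have o1: "q u (I u) = 0" using I_orthogonal_self[OF uV(1)] commute by simp
  have o2: "q u (J u) = 0" using orthogonal_self[OF uV(1)] commute by simp
  have o3: "q u (I (J u)) = 0"
    using I_skew[OF uV(2,1)] J_I_orthogonal[OF uV(1)] commute by (metis minus_zero)
  have o4: "q (I u) (J u) = 0" using J_I_orthogonal[OF uV(1)] commute by simp
  have o5: "q (I u) (I (J u)) = 0" using I_isometry[OF uV(1,2)] o2 by simp
  have o6: "q (J u) (I (J u)) = 0" using I_orthogonal_self[OF uV(2)] commute by simp
  note orth = o1 o2 o3 o4 o5 o6 o1[unfolded commute[of u]] o2[unfolded commute[of u]]
    o3[unfolded commute[of u]] o4[unfolded commute[of "I u"]] o5[unfolded commute[of "I u"]]
    o6[unfolded commute[of "J u"]]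
  show "pairwise (\<lambda>a b. q a b = 0) F" unfolding F_def using orth by (auto simp: pairwise_insert)
  have "u \<noteq> I u" "u \<noteq> J u" "u \<noteq> I (J u)" "I u \<noteq> J u" "I u \<noteq> I (J u)" "J u \<noteq> I (J u)"
    using neq_if_orthogonal[OF _ _ o1] neq_if_orthogonal[OF _ _ o2] neq_if_orthogonal[OF _ _ o3]
      neq_if_orthogonal[OF _ _ o4] neq_if_orthogonal[OF _ _ o5] neq_if_orthogonal[OF _ _ o6] uV nz
    unfolding F_def by auto
  then show "card F = 4" unfolding F_def by simp
qed

lemma rank4_square_scalar:
  assumes "\<exists>x\<in>V. J x \<noteq> 0" "dim (J ` V) \<le> 4"
  shows "dim (J ` V) = 4" "\<exists>a. a \<noteq> 0 \<and> (\<forall>w\<in>J ` V. J (J w) = a *\<^sub>R w)"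
proof -
  obtain x where x: "x \<in> V" "J x \<noteq> 0" using assms(1) by blast
  define u where "u = J x"
  have u: "u \<in> J ` V" "u \<noteq> 0" "u \<in> V" "J u \<in> V" "I u \<in> V" using x J_in I_in unfolding u_def by auto
  define F where "F = {u, I u, J u, I (J u)}"
  note frame = orthogonal_frame[OF u(1,2), folded F_def]
  have "finite F" "F \<subseteq> V" unfolding F_def using u I_in[OF u(4)] by auto
  note spanned = spanned_by_orthogonal_family[OF \<open>finite F\<close> frame(1) J_image_subset frame(2,3)]
  show "dim (J ` V) = 4" using spanned(2) assms(2) frame(4) by simp
  have span: "J ` V \<subseteq> span F" using spanned(1) assms(2) frame(4) by simp
  have "\<exists>a. J (J u) = a *\<^sub>R u"
  proof (rule in_span_single_if_orthogonal[OF \<open>finite F\<close> frame(3) \<open>F \<subseteq> V\<close> frame(2)])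
    show "J (J u) \<in> span F" using span u(4) by blast
    have "q (J (J u)) (I u) = q (J u) (I (J u))"
      using skew[OF u(4,5)] J_I by (simp add: form_simps)
    then show "q (J (J u)) f = 0" if "f \<in> F" "f \<noteq> u" for f
      using that I_orthogonal_self[OF u(4)] orthogonal_self[OF u(4)] J_I_orthogonal[OF u(4)] commute
      unfolding F_def by auto
  qed (simp add: F_def)
  then obtain a where a: "J (J u) = a *\<^sub>R u" by blast
  have "J (J (I w)) = I (J (J w))" for w using J_I linear_neg[OF linear_J] by simp
  then have "J (J f) = a *\<^sub>R f" if "f \<in> F" for f
    using that a linear_scale[OF linear_I] linear_scale[OF linear_J] unfolding F_def by auto
  moreover have "J (J u) \<noteq> 0" using J_J_neq_0[OF u(3)] J_J_neq_0[OF x] unfolding u_def by blast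
  then have "a \<noteq> 0" using a by auto
  ultimately show "\<exists>a. a \<noteq> 0 \<and> (\<forall>w\<in>J ` V. J (J w) = a *\<^sub>R w)"
    using square_scalar_on_image[OF span] by blast
qed

end

lemma inner_form_on_complexify:
  assumes "inner_form_on V q"
  shows "inner_form_on (V \<times> V) (complexify_ip q)"
proof -
  interpret inner_form_on V q by fact
  show ?thesis
  proof
    show "subspace (V \<times> V)" using subspace_Times[OF subspace_V subspace_V] .
    have "linear (\<lambda>x. complexify_ip q x y)" for y
      by (rule linearI) (simp_all add: complexify_ip_def form_simps algebra_simps)
    moreover have "linear (complexify_ip q x)" for x
      by (rule linearI) (simp_all add: complexify_ip_def form_simps algebra_simps)
    ultimately show "bilinear (complexify_ip q)" unfolding bilinear_def by blast
    show "complexify_ip q x y = complexify_ip q y x" for x y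
      by (simp add: complexify_ip_def commute)
    fix p assume p: "p \<in> V \<times> V" "p \<noteq> 0"
    then have "fst p \<noteq> 0 \<or> snd p \<noteq> 0" by (cases p) (auto simp: zero_prod_def)
    then show "0 < complexify_ip q p p"
      using p(1) pos[of "fst p"] pos[of "snd p"] nonneg[of "fst p"] nonneg[of "snd p"]
      unfolding complexify_ip_def by (auto simp: add_pos_nonneg add_nonneg_pos mem_Times_iff)
  qed
qed

lemma (in inner_form_on) skew_on_anticommuting_complexify:
  assumes "skew_on V q J1" "skew_on V q J2"
  shows "skew_on_anticommuting (V \<times> V) (complexify_ip q)
    (\<lambda>p. (J1 (fst p) + J2 (snd p), J2 (fst p) - J1 (snd p))) i_mult"
proof -
  interpret J1: skew_on V q J1 by fact
  interpret J2: skew_on V q J2 by fact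
  show ?thesis
  proof (intro skew_on_anticommuting.intro skew_on.intro skew_on_axioms.intro
      skew_on_anticommuting_axioms.intro inner_form_on_complexify inner_form_on_axioms)
    show "linear (\<lambda>p. (J1 (fst p) + J2 (snd p), J2 (fst p) - J1 (snd p)))"
      using J1.linear_J J2.linear_J by (intro linearI) (simp_all add: linear_add linear_scale algebra_simps)
    show "(J1 (fst p) + J2 (snd p), J2 (fst p) - J1 (snd p)) \<in> V \<times> V" for p
      using J1.J_in J2.J_in subspace_V by (auto intro: subspace_add subspace_diff)
    show "complexify_ip q (J1 (fst x) + J2 (snd x), J2 (fst x) - J1 (snd x)) y
        = - complexify_ip q x (J1 (fst y) + J2 (snd y), J2 (fst y) - J1 (snd y))"
      if "x \<in> V \<times> V" "y \<in> V \<times> V" for x y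
      using that J1.skew J2.skew by (auto simp: complexify_ip_def form_simps)
    show "i_mult x \<in> V \<times> V" if "x \<in> V \<times> V" for x
      using that subspace_V subspace_neg by (auto simp: i_mult_def)
    show "complexify_ip q (i_mult x) y = - complexify_ip q x (i_mult y)" for x y
      by (simp add: complexify_ip_def i_mult_def form_simps commute[of "snd x"])
    show "(J1 (fst (i_mult x)) + J2 (snd (i_mult x)), J2 (fst (i_mult x)) - J1 (snd (i_mult x)))
        = - i_mult (J1 (fst x) + J2 (snd x), J2 (fst x) - J1 (snd x))" for x
      using linear_neg[OF J1.linear_J] linear_neg[OF J2.linear_J] by (simp add: i_mult_def)
  qed (simp_all add: linear_i_mult)
qed

lemma linear_complexify_parts:
  assumes "linear \<eta>"
  shows "linear (\<lambda>a. \<eta> (a, 0))" "linear (\<lambda>b. \<eta> (0, b))" "\<eta> (a, b) = \<eta> (a, 0) + \<eta> (0, b)"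
  using assms linear_add[OF assms, of "(a, 0)" "(0, b)"]
  by (auto simp: linear_iff linear_add[OF assms, symmetric] linear_scale[OF assms, symmetric])

lemma center_complexify:
  assumes "bilinear br" "w \<in> center (complexify_br br)"
  shows "fst w \<in> center br" "snd w \<in> center br"
proof -
  have "complexify_br br w (c, 0) = 0" for c using assms(2) unfolding center_def by blast
  then have "br (fst w) c = 0 \<and> br (snd w) c = 0" for c
    by (simp add: complexify_br_def bilinear_rzero[OF assms(1)] zero_prod_def)
  then show "fst w \<in> center br" "snd w \<in> center br" unfolding center_def by auto
qed

lemma (in inner_form_on) Jmap_complexify:
  assumes b: "bilinear br" and l: "linear \<eta>"
  defines "J1 \<equiv> Jmap br V q (\<lambda>a. \<eta> (a, 0))" and "J2 \<equiv> Jmap br V q (\<lambda>b. \<eta> (0, b))"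
  shows "Jmap (complexify_br br) (V \<times> V) (complexify_ip q) \<eta>
    = (\<lambda>p. (J1 (fst p) + J2 (snd p), J2 (fst p) - J1 (snd p)))"
proof
  interpret C: inner_form_on "V \<times> V" "complexify_ip q"
    by (rule inner_form_on_complexify) unfold_locales
  note l12 = linear_complexify_parts[OF l]
  note c1 = Jmap[OF b l12(1), folded J1_def] and c2 = Jmap[OF b l12(2), folded J2_def]
  fix p :: "'a \<times> 'a"
  show "Jmap (complexify_br br) (V \<times> V) (complexify_ip q) \<eta> p
    = (J1 (fst p) + J2 (snd p), J2 (fst p) - J1 (snd p))"
  proof (rule C.Jmap_eqI)
    show "(J1 (fst p) + J2 (snd p), J2 (fst p) - J1 (snd p)) \<in> V \<times> V"
      using c1(1) c2(1) subspace_V by (auto intro: subspace_add subspace_diff)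
    fix x' :: "'a \<times> 'a" assume "x' \<in> V \<times> V"
    then show "complexify_ip q (J1 (fst p) + J2 (snd p), J2 (fst p) - J1 (snd p)) x'
      = \<eta> (complexify_br br p x')"
      using c1(2) c2(2) l12(3)[of "br (fst p) (fst x') - br (snd p) (snd x')"]
      by (auto simp: complexify_ip_def complexify_br_def form_simps linear_diff[OF l12(1)]
          linear_add[OF l12(2)])
  qed
qed

context inner_form_on
begin

lemma pluecker_add:
  "pluecker q (\<lambda>x. J x + K x) (\<lambda>x. J x + K x) x1 x2 x3
    = pluecker q J J x1 x2 x3 + pluecker q K K x1 x2 x3 + (pluecker q J K x1 x2 x3 + pluecker q K J x1 x2 x3)"
  by (simp add: pluecker_def form_simps scaleR_add_left scaleR_add_right algebra_simps)

context
  fixes br :: "'a \<Rightarrow> 'a \<Rightarrow> 'a"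
  assumes two_step: "two_step br"
    and rank2: "\<forall>\<eta>. nonzero_dual_center br \<eta> \<longrightarrow> dim (Jmap br V q \<eta> ` V) = 2"
begin

lemma pluecker_Jmap:
  assumes l: "linear \<eta>" and x: "x1 \<in> V" "x2 \<in> V" "x3 \<in> V"
  shows "pluecker q (Jmap br V q \<eta>) (Jmap br V q \<eta>) x1 x2 x3 = 0"
proof (cases "nonzero_dual_center br \<eta>")
  case True
  interpret skew_on V q "Jmap br V q \<eta>" by (rule skew_on_Jmap[OF two_step l])
  show ?thesis by (rule pluecker_rank2[OF rank2[rule_format, OF True] x])
next
  case False
  then have "\<forall>w\<in>center br. \<eta> w = 0" using l unfolding nonzero_dual_center_def by blast
  then show ?thesis by (simp add: pluecker_def Jmap_eq_0[OF two_step])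
qed

lemma pluecker_Jmap_mixed:
  assumes l: "linear \<eta>1" "linear \<eta>2" and x: "x1 \<in> V" "x2 \<in> V" "x3 \<in> V"
  shows "pluecker q (Jmap br V q \<eta>1) (Jmap br V q \<eta>2) x1 x2 x3
    + pluecker q (Jmap br V q \<eta>2) (Jmap br V q \<eta>1) x1 x2 x3 = 0"
proof -
  have "Jmap br V q (\<lambda>w. \<eta>1 w + \<eta>2 w) = (\<lambda>x. Jmap br V q \<eta>1 x + Jmap br V q \<eta>2 x)"
    using Jmap_add[OF two_step_bilinear[OF two_step] l] by (intro ext)
  then show ?thesis
    using pluecker_Jmap[OF linear_compose_add[OF l] x] pluecker_Jmap[OF l(1) x] pluecker_Jmap[OF l(2) x]
    by (simp add: pluecker_add)
qed

lemma exists_Jmap_pairing_neq_0: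
  assumes "nonzero_dual_center br \<eta>"
  obtains a1 a2 where "a1 \<in> V" "a2 \<in> V" "q (Jmap br V q \<eta> a1) a2 \<noteq> 0"
proof -
  have "linear \<eta>" using assms unfolding nonzero_dual_center_def by blast
  interpret skew_on V q "Jmap br V q \<eta>" by (rule skew_on_Jmap[OF two_step \<open>linear \<eta>\<close>])
  obtain a1 where "a1 \<in> V" "Jmap br V q \<eta> a1 \<noteq> 0" using exists_J_neq_0 rank2[rule_format, OF assms] by auto
  then show thesis using that[of a1 "Jmap br V q \<eta> a1"] pos J_in by force
qed

text \<open>The Pluecker relations for \<open>\<eta>\<^sub>1\<close>, \<open>\<eta>\<^sub>2\<close> and \<open>\<eta>\<^sub>1 + \<eta>\<^sub>2\<close> combine into a single
  relation with complex coefficients \<open>\<omega>\<close>, which puts every \<open>\<rho> a\<close> into the complex span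
  of \<open>\<rho> a\<^sub>1\<close> and \<open>\<rho> a\<^sub>2\<close>.\<close>

lemma complexified_image_in_span:
  assumes l: "linear \<eta>1" "linear \<eta>2" and a: "a1 \<in> V" "a2 \<in> V" "a \<in> V"
    and nz: "q (Jmap br V q \<eta>1 a1) a2 \<noteq> 0 \<or> q (Jmap br V q \<eta>2 a1) a2 \<noteq> 0"
  defines "\<rho> x \<equiv> (Jmap br V q \<eta>1 x, Jmap br V q \<eta>2 x)"
  shows "\<rho> a \<in> span ({\<rho> a1, \<rho> a2} \<union> i_mult ` {\<rho> a1, \<rho> a2})"
proof -
  let ?S = "span ({\<rho> a1, \<rho> a2} \<union> i_mult ` {\<rho> a1, \<rho> a2})"
  define \<omega> where "\<omega> x y = Complex (q (Jmap br V q \<eta>1 x) y) (q (Jmap br V q \<eta>2 x) y)" for x y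
  let ?J1 = "Jmap br V q \<eta>1" and ?J2 = "Jmap br V q \<eta>2"
  have "cmul (\<omega> a1 a2) (\<rho> a) - cmul (\<omega> a1 a) (\<rho> a2) + cmul (\<omega> a2 a) (\<rho> a1)
    = (pluecker q ?J1 ?J1 a1 a2 a - pluecker q ?J2 ?J2 a1 a2 a,
       pluecker q ?J1 ?J2 a1 a2 a + pluecker q ?J2 ?J1 a1 a2 a)"
    by (simp add: cmul_def i_mult_def pluecker_def \<omega>_def \<rho>_def algebra_simps)
  also have "\<dots> = 0"
    using pluecker_Jmap[OF l(1) a] pluecker_Jmap[OF l(2) a] pluecker_Jmap_mixed[OF l a]
    by (simp add: zero_prod_def)
  finally have "cmul (\<omega> a1 a2) (\<rho> a) = cmul (\<omega> a1 a) (\<rho> a2) - cmul (\<omega> a2 a) (\<rho> a1)"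
    by (simp add: algebra_simps)
  also have "\<dots> \<in> ?S" by (intro span_diff cmul_in_span span_base) auto
  finally have "cmul (\<omega> a1 a2) (\<rho> a) \<in> ?S" .
  moreover have "\<omega> a1 a2 \<noteq> 0" using nz by (simp add: \<omega>_def complex_eq_iff)
  ultimately show ?thesis by (rule in_span_if_cmul_in_span)
qed

lemma exists_complexified_pairing_neq_0:
  assumes "nonzero_dual_center (complexify_br br) \<eta>"
  obtains a1 a2 where "a1 \<in> V" "a2 \<in> V"
    "q (Jmap br V q (\<lambda>a. \<eta> (a, 0)) a1) a2 \<noteq> 0 \<or> q (Jmap br V q (\<lambda>b. \<eta> (0, b)) a1) a2 \<noteq> 0"
proof -
  have l: "linear \<eta>" using assms unfolding nonzero_dual_center_def by blast
  note l12 = linear_complexify_parts[OF l]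
  obtain w where w: "w \<in> center (complexify_br br)" "\<eta> w \<noteq> 0"
    using assms unfolding nonzero_dual_center_def by blast
  have "\<eta> (fst w, 0) \<noteq> 0 \<or> \<eta> (0, snd w) \<noteq> 0" using w(2) l12(3)[of "fst w" "snd w"] by auto
  then have "nonzero_dual_center br (\<lambda>a. \<eta> (a, 0)) \<or> nonzero_dual_center br (\<lambda>b. \<eta> (0, b))"
    using center_complexify[OF two_step_bilinear[OF two_step] w(1)] l12
    unfolding nonzero_dual_center_def by blast
  then show thesis using that exists_Jmap_pairing_neq_0 by metis
qed

lemma complexified_Jmap_rank_le_4:
  assumes l: "linear \<eta>1" "linear \<eta>2" and a: "a1 \<in> V" "a2 \<in> V"
    and nz: "q (Jmap br V q \<eta>1 a1) a2 \<noteq> 0 \<or> q (Jmap br V q \<eta>2 a1) a2 \<noteq> 0"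
  defines "J1 \<equiv> Jmap br V q \<eta>1" and "J2 \<equiv> Jmap br V q \<eta>2"
  defines "JC \<equiv> \<lambda>p. (J1 (fst p) + J2 (snd p), J2 (fst p) - J1 (snd p))"
  shows "dim (JC ` (V \<times> V)) \<le> 4" "\<exists>x\<in>V \<times> V. JC x \<noteq> 0"
proof -
  define \<rho> where "\<rho> x = (J1 x, J2 x)" for x
  let ?B = "{\<rho> a1, \<rho> a2} \<union> i_mult ` {\<rho> a1, \<rho> a2}"
  have \<rho>_span: "\<rho> a \<in> span ?B" if "a \<in> V" for a
    using complexified_image_in_span[OF l a that nz] unfolding \<rho>_def J1_def J2_def .
  have "JC p \<in> span ?B" if "p \<in> V \<times> V" for p
  proof -
    have "JC p = \<rho> (fst p) - cmul \<i> (\<rho> (snd p))"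
      by (simp add: JC_def \<rho>_def cmul_def i_mult_def)
    moreover have "fst p \<in> V" "snd p \<in> V" using that by auto
    ultimately show ?thesis
      using span_diff[OF \<rho>_span cmul_in_span[OF \<rho>_span]] by metis
  qed
  then have "JC ` (V \<times> V) \<subseteq> span ?B" by blast
  then have "dim (JC ` (V \<times> V)) \<le> card ?B" by (rule dim_le_card) simp
  also have "card ?B \<le> length [\<rho> a1, \<rho> a2, i_mult (\<rho> a1), i_mult (\<rho> a2)]"
  proof -
    have "?B = set [\<rho> a1, \<rho> a2, i_mult (\<rho> a1), i_mult (\<rho> a2)]" by auto
    then show ?thesis by (simp only: card_length)
  qed
  finally show "dim (JC ` (V \<times> V)) \<le> 4" by simp
  have "J1 0 = 0" "J2 0 = 0"
    unfolding J1_def J2_def using linear_0 linear_Jmap[OF two_step_bilinear[OF two_step]] l by blast+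
  moreover have "J1 a1 \<noteq> 0 \<or> J2 a1 \<noteq> 0" using nz form_simps(9) unfolding J1_def J2_def by auto
  ultimately have "JC (a1, 0) \<noteq> 0" by (simp add: JC_def zero_prod_def)
  moreover have "(a1, 0) \<in> V \<times> V" using a(1) subspace_0[OF subspace_V] by simp
  ultimately show "\<exists>x\<in>V \<times> V. JC x \<noteq> 0" by blast
qed

end

end

lemma assumptionA_complexify:
  assumes t: "two_step br" and c0: "complement_of_center br V0" and ip0: "inner_product_on V0 ip0"
    and rank2: "\<forall>\<eta>. nonzero_dual_center br \<eta> \<longrightarrow> dim (Jmap br V0 ip0 \<eta> ` V0) = 2"
  shows "assumptionA (complexify_br br) (V0 \<times> V0) (complexify_ip ip0)"
proof -
  have V0: "subspace V0" using c0 unfolding complement_of_center_def by blast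
  define q0 where "q0 = extend_form V0 ip0"
  have q0: "inner_form_on V0 q0" unfolding q0_def by (rule inner_form_on_extend_form[OF V0 ip0])
  interpret inner_form_on V0 q0 by (fact q0)
  have "Jmap br V0 q0 = Jmap br V0 ip0" unfolding q0_def by (rule Jmap_cong) (simp add: extend_form_eq[OF V0])
  then have rank2': "\<forall>\<eta>. nonzero_dual_center br \<eta> \<longrightarrow> dim (Jmap br V0 q0 \<eta> ` V0) = 2"
    using rank2 by simp
  have ipC: "complexify_ip ip0 x y = complexify_ip q0 x y" if "x \<in> V0 \<times> V0" "y \<in> V0 \<times> V0" for x y
    using that by (auto simp: complexify_ip_def q0_def extend_form_eq[OF V0])
  show ?thesis
  proof (rule assumptionA_single_block[OF inner_form_on_complexify[OF q0] ipC, where r = 2])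
    fix \<eta> assume \<eta>: "nonzero_dual_center (complexify_br br) \<eta>"
    then have l: "linear \<eta>" unfolding nonzero_dual_center_def by blast
    define J1 where "J1 = Jmap br V0 q0 (\<lambda>a. \<eta> (a, 0))"
    define J2 where "J2 = Jmap br V0 q0 (\<lambda>b. \<eta> (0, b))"
    let ?J = "\<lambda>p. (J1 (fst p) + J2 (snd p), J2 (fst p) - J1 (snd p))"
    note l12 = linear_complexify_parts[OF l]
    have J: "Jmap (complexify_br br) (V0 \<times> V0) (complexify_ip q0) \<eta> = ?J"
      unfolding J1_def J2_def by (rule Jmap_complexify[OF two_step_bilinear[OF t] l])
    interpret C: skew_on_anticommuting "V0 \<times> V0" "complexify_ip q0" ?J i_mult
      unfolding J1_def J2_def by (intro skew_on_anticommuting_complexify skew_on_Jmap t l12)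
    obtain a1 a2 where a: "a1 \<in> V0" "a2 \<in> V0" and nz: "q0 (J1 a1) a2 \<noteq> 0 \<or> q0 (J2 a1) a2 \<noteq> 0"
      using exists_complexified_pairing_neq_0[OF t rank2' \<eta>] unfolding J1_def J2_def by metis
    note rank = complexified_Jmap_rank_le_4[OF t rank2' l12(1,2) a nz[unfolded J1_def J2_def],
        folded J1_def J2_def]
    let ?JC = "Jmap (complexify_br br) (V0 \<times> V0) (complexify_ip q0) \<eta>"
    show "skew_on (V0 \<times> V0) (complexify_ip q0) ?JC \<and> dim (?JC ` (V0 \<times> V0)) = 2 * 2 \<and>
        (\<exists>a. a \<noteq> 0 \<and> (\<forall>w\<in>?JC ` (V0 \<times> V0). ?JC (?JC w) = a *\<^sub>R w))"
      unfolding J using C.skew_on_axioms C.rank4_square_scalar[OF rank(2,1)] by simp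
  qed (simp_all add: zero_less_one)
qed

theorem proposition6p1:
  fixes br :: "'g::euclidean_space \<Rightarrow> 'g \<Rightarrow> 'g"
    and V0 :: "'g set" and ip0 :: "'g \<Rightarrow> 'g \<Rightarrow> real"
  assumes "two_step br"
    and "complement_of_center br V0"
    and "inner_product_on V0 ip0"
    and "\<forall>\<eta>. nonzero_dual_center br \<eta> \<longrightarrow> dim (Jmap br V0 ip0 \<eta> ` V0) = 2"
  shows "assumptionA br V0 ip0
    \<and> (\<forall>V ip. complement_of_center br V \<and> inner_product_on V ip \<longrightarrow> assumptionA br V ip)
    \<and> assumptionA (complexify_br br) (V0 \<times> V0) (complexify_ip ip0)"
  using assumptionA_rank2[OF assms] assumptionA_complexify[OF assms] assms(2,3) by blast

end
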